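(* (a) Let $V\subset\mathbb R^m$ be a closed convex body centrally symmetric with respect to the origin, with width $w(V)$. For every $x\in\mathbb R^m\setminus V$ and every $P\in\mathcal P_{n,m}$, $$|P(x)|\le T_n\big(2|x|/w(V)\big)\|P\|_{C(V)}.$$ (b) For every $\lambda>0$, $k\in\mathbb Z^m_+$, $x\in\mathbb R^m$ with $|x_j|>\lambda$ for all $j=1,\dots,m$, and every $P\in\mathcal Q_{n,m}$, $$|D^kP(x)|\le\lambda^{-\langle k\rangle}\Big|\prod_{j=1}^mT_n^{(k_j)}(x_j/\lambda)\Big|\,\|P\|_{C(Q^m_\lambda)}.$$
   Context: $|x|$ is the Euclidean norm. The width $w(V)$ is the minimum distance between two parallel supporting hyperplanes of $V$. $\mathcal P_{n,m}$ is the set of polynomials $\sum_{\langle k\rangle\le n}c_kx^k$ in $m$ variables with complex coefficients of total degree at most $n$; $\mathcal Q_{n,m}$ is the set of polynomials $\sum_{k\in\mathbb Z^m_+,\max_jk_j\le n}c_kx^k$ with complex coefficients of degree at most $n$ in each variable. For $k\in\mathbb Z^m_+$: $\langle k\rangle=\sum k_j$, $x^k=\prod x_j^{k_j}$, $D^k=\prod\partial^{k_j}/\partial x_j^{k_j}$. $Q^m_\lambda=\{x:\max_j|x_j|\le\lambda\}$. $T_n(u)=\frac12((u+\sqrt{u^2-1})^n+(u-\sqrt{u^2-1})^n)$ is the Chebyshev polynomial; $\|P\|_{C(S)}=\max_S|P|$. *)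

theory Defs
  imports "HOL-Analysis.Analysis"
begin

text \<open>Chebyshev polynomial T_n(u) = ((u + sqrt(u^2-1))^n + (u - sqrt(u^2-1))^n)/2,
  evaluated with the complex square root so that the formula is valid for all real u.\<close>
definition cheb :: "nat \<Rightarrow> real \<Rightarrow> real" where
  "cheb n u = Re (((complex_of_real u + csqrt (complex_of_real (u^2 - 1))) ^ n
                 + (complex_of_real u - csqrt (complex_of_real (u^2 - 1))) ^ n) / 2)"

definition Pdeg :: "nat \<Rightarrow> ('m::finite \<Rightarrow> nat) set" where
  "Pdeg n = {a. (\<Sum>j\<in>UNIV. a j) \<le> n}"

definition Qdeg :: "nat \<Rightarrow> ('m::finite \<Rightarrow> nat) set" where
  "Qdeg n = {a. \<forall>j. a j \<le> n}"

definition mpoly_eval :: "('m::finite \<Rightarrow> nat) set \<Rightarrow> (('m \<Rightarrow> nat) \<Rightarrow> complex) \<Rightarrow> real^'m \<Rightarrow> complex" where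
  "mpoly_eval S c x = (\<Sum>a\<in>S. c a * (\<Prod>j\<in>UNIV. complex_of_real ((x$j) ^ a j)))"

text \<open>D^k applied to the polynomial sum over a in S of c_a x^a, evaluated at x:
  D^k x^a = prod_j a_j(a_j-1)...(a_j-k_j+1) x_j^(a_j-k_j)  (zero if some k_j > a_j).\<close>
definition mpoly_deriv :: "('m::finite \<Rightarrow> nat) set \<Rightarrow> (('m \<Rightarrow> nat) \<Rightarrow> complex) \<Rightarrow> ('m \<Rightarrow> nat) \<Rightarrow> real^'m \<Rightarrow> complex" where
  "mpoly_deriv S c k x = (\<Sum>a\<in>S. c a * (\<Prod>j\<in>UNIV.
       of_nat (fact (k j) * (a j choose k j)) * complex_of_real ((x$j) ^ (a j - k j))))"

definition width :: "'a::euclidean_space set \<Rightarrow> real" where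
  "width V = Inf {(SUP y\<in>V. u \<bullet> y) - (INF y\<in>V. u \<bullet> y) | u. norm u = 1}"

definition cube :: "real \<Rightarrow> (real^'m) set" where
  "cube lam = {y. \<forall>j. \<bar>y$j\<bar> \<le> lam}"

end

theory Submission
  imports Defs "HOL-Computational_Algebra.Polynomial"
begin

(* Let p be a real polynomial of degree at most n with |p| <= M on [-1, 1], and |t| >= 1.
   Lagrange interpolation at the extremal points eta_i = cos (i pi / n) of T_n gives
   p^(k)(t) = sum_i p(eta_i) D_i and T_n^(k)(t) = sum_i (-1)^i D_i. The roots of every Lagrange
   polynomial lie in [-1, 1], so their k-th derivatives share one sign at t, while the i-th one
   has sign (-1)^i at eta_i; hence |T_n^(k)(t)| = sum_i |D_i| >= |p^(k)(t)| / M. Complex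
   coefficients reduce to this by a rotation, other intervals by scaling.
   For (a), a symmetric convex body of width w contains the ball of radius w/2 about 0, so the
   line through 0 and x meets V in a segment of length at least w centred at 0; apply the
   one-variable bound to P on that line. For (b), apply it in each coordinate in turn, with the
   remaining coordinates frozen. *)

section \<open>Chebyshev polynomials\<close>

fun cheb_poly :: "nat \<Rightarrow> real poly" where
  "cheb_poly 0 = 1"
| "cheb_poly (Suc 0) = [:0, 1:]"
| "cheb_poly (Suc (Suc n)) = [:0, 2:] * cheb_poly (Suc n) - cheb_poly n"

lemma poly_cheb_poly: "poly (cheb_poly n) u = cheb n u"
proof -
  define r where "r = csqrt (complex_of_real (u\<^sup>2 - 1))"
  define z\<^sub>1 where "z\<^sub>1 = complex_of_real u + r"
  define z\<^sub>2 where "z\<^sub>2 = complex_of_real u - r"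
  have r2: "r\<^sup>2 = complex_of_real (u\<^sup>2 - 1)"
    unfolding r_def by (rule power2_csqrt)
  \<comment> \<open>both are roots of z^2 = 2uz - 1, so their powers obey the Chebyshev recurrence\<close>
  have roots: "z\<^sub>1\<^sup>2 = 2 * complex_of_real u * z\<^sub>1 - 1" "z\<^sub>2\<^sup>2 = 2 * complex_of_real u * z\<^sub>2 - 1"
    using r2 unfolding z\<^sub>1_def z\<^sub>2_def by (simp_all add: power2_eq_square algebra_simps)
  have "complex_of_real (poly (cheb_poly n) u) = (z\<^sub>1 ^ n + z\<^sub>2 ^ n) / 2"
  proof (induction n rule: cheb_poly.induct)
    case (3 n)
    have pow: "z\<^sub>1 ^ Suc (Suc n) = z\<^sub>1 ^ n * z\<^sub>1\<^sup>2" "z\<^sub>2 ^ Suc (Suc n) = z\<^sub>2 ^ n * z\<^sub>2\<^sup>2"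
      by (simp_all add: power2_eq_square algebra_simps)
    have "complex_of_real (poly (cheb_poly (Suc (Suc n))) u)
        = 2 * complex_of_real u * complex_of_real (poly (cheb_poly (Suc n)) u)
          - complex_of_real (poly (cheb_poly n) u)"
      by simp
    also have "\<dots> = 2 * complex_of_real u * ((z\<^sub>1 ^ Suc n + z\<^sub>2 ^ Suc n) / 2) - (z\<^sub>1 ^ n + z\<^sub>2 ^ n) / 2"
      by (simp only: 3)
    also have "\<dots> = (z\<^sub>1 ^ Suc (Suc n) + z\<^sub>2 ^ Suc (Suc n)) / 2"
      unfolding pow roots by (simp add: field_simps)
    finally show ?case .
  qed (simp_all add: z\<^sub>1_def z\<^sub>2_def)
  then show ?thesis
    unfolding cheb_def z\<^sub>1_def z\<^sub>2_def r_def by (metis Re_complex_of_real)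
qed

lemma poly_cheb_poly_cos: "poly (cheb_poly n) (cos \<theta>) = cos (real n * \<theta>)"
proof (induction n rule: cheb_poly.induct)
  case (3 n)
  have "cos (real (Suc (Suc n)) * \<theta>) + cos (real n * \<theta>) = 2 * cos (real (Suc n) * \<theta>) * cos \<theta>"
    using cos_add[of "real (Suc n) * \<theta>" \<theta>] cos_diff[of "real (Suc n) * \<theta>" \<theta>]
    by (simp add: algebra_simps)
  then show ?case
    using 3 by (simp add: algebra_simps)
qed auto

lemma degree_cheb_poly_le: "degree (cheb_poly n) \<le> n"
proof (induction n rule: cheb_poly.induct)
  case (3 n)
  have "degree ([:0, 2:] * cheb_poly (Suc n)) \<le> Suc (Suc n)"
    using degree_mult_le[of "[:0, 2:]" "cheb_poly (Suc n)"] 3 by simp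
  then show ?case
    using 3 by (auto intro!: degree_diff_le)
qed auto

lemma cheb_nonneg:
  assumes "1 \<le> t"
  shows "0 \<le> cheb n t"
proof -
  define s where "s = sqrt (t\<^sup>2 - 1)"
  have t2: "0 \<le> t\<^sup>2 - 1"
    using assms by (simp add: one_le_power)
  have "s \<le> sqrt (t\<^sup>2)"
    unfolding s_def by (rule real_sqrt_le_mono) simp
  then have "0 \<le> (t + s) ^ n" "0 \<le> (t - s) ^ n"
    using assms t2 by (simp_all add: s_def)
  moreover have "cheb n t = ((t + s) ^ n + (t - s) ^ n) / 2"
    unfolding cheb_def s_def csqrt_of_real[OF t2] by (simp flip: of_real_add of_real_diff of_real_power)
  ultimately show ?thesis
    by simp
qed

lemma higher_deriv_poly:
  fixes p :: "'a::real_normed_field poly"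
  shows "(deriv ^^ k) (poly p) = poly ((pderiv ^^ k) p)"
proof (induction k)
  case (Suc k)
  have "deriv (poly q) = poly (pderiv q)" for q :: "'a poly"
    by (rule ext, rule DERIV_imp_deriv, rule poly_DERIV)
  with Suc show ?case
    by simp
qed simp

lemma higher_deriv_cheb: "(deriv ^^ k) (cheb n) = poly ((pderiv ^^ k) (cheb_poly n))"
  by (simp add: higher_deriv_poly poly_cheb_poly[abs_def, symmetric])

section \<open>Higher derivatives of monomials and of products of linear factors\<close>

lemma fact_mult_choose_Suc: "(d - k) * (fact k * (d choose k)) = fact (Suc k) * (d choose Suc k)"
proof -
  have "Suc k * (d choose Suc k) = (d - k) * (d choose k)"
    by (metis binomial_absorb_comp times_binomial_minus1_eq diff_Suc_1 zero_less_Suc)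
  then have "(d - k) * (fact k * (d choose k)) = fact k * (Suc k * (d choose Suc k))"
    by (simp add: mult.commute mult.left_commute)
  also have "\<dots> = fact (Suc k) * (d choose Suc k)"
    by (simp add: algebra_simps)
  finally show ?thesis .
qed

lemma higher_pderiv_monom_fact_choose:
  "(pderiv ^^ k) (monom a d) = monom (of_nat (fact k * (d choose k)) * a) (d - k)"
proof (induction k)
  case (Suc k)
  have "(pderiv ^^ Suc k) (monom a d) = monom (of_nat (d - k) * (of_nat (fact k * (d choose k)) * a)) (d - Suc k)"
    using Suc by (simp add: pderiv_monom)
  also have "\<dots> = monom (of_nat ((d - k) * (fact k * (d choose k))) * a) (d - Suc k)"
    by (simp only: of_nat_mult mult.assoc)
  also have "\<dots> = monom (of_nat (fact (Suc k) * (d choose Suc k)) * a) (d - Suc k)"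
    by (simp only: fact_mult_choose_Suc)
  finally show ?case .
qed simp

lemma poly_higher_pderiv_monom_sum:
  "poly ((pderiv ^^ k) (\<Sum>d\<le>n. monom (b d) d)) t
   = (\<Sum>d\<le>n. of_nat (fact k * (d choose k)) * t ^ (d - k) * b d)"
  by (simp add: higher_pderiv_sum poly_sum higher_pderiv_monom_fact_choose poly_monom algebra_simps)

lemma coeff_prod_nonneg:
  fixes f :: "'a \<Rightarrow> 'b::linordered_idom poly"
  assumes "\<And>j i. j \<in> A \<Longrightarrow> 0 \<le> coeff (f j) i"
  shows "0 \<le> coeff (prod f A) i"
  using assms
proof (induction A arbitrary: i rule: infinite_finite_induct)
  case (insert x F)
  then show ?case
    by (auto simp: coeff_mult intro!: sum_nonneg)
qed (simp_all add: coeff_1)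

lemma coeff_higher_pderiv_nonneg:
  fixes p :: "'a::linordered_idom poly"
  assumes "\<And>i. 0 \<le> coeff p i"
  shows "0 \<le> coeff ((pderiv ^^ k) p) i"
  unfolding coeff_higher_pderiv using assms by (simp add: pochhammer_nonneg add_pos_nonneg)

lemma higher_pderiv_pcompose_linear:
  "(pderiv ^^ k) (p \<circ>\<^sub>p [:t, s:]) = smult (s ^ k) ((pderiv ^^ k) p \<circ>\<^sub>p [:t, s:])"
proof (induction k)
  case (Suc k)
  then show ?case
    by (simp add: pderiv_smult pderiv_pcompose pderiv_pCons mult.commute)
qed simp

lemma poly_higher_pderiv_eq_coeff_pcompose:
  "s ^ k * poly ((pderiv ^^ k) p) t = coeff ((pderiv ^^ k) (p \<circ>\<^sub>p [:t, s:])) 0"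
  by (simp add: higher_pderiv_pcompose_linear poly_0_coeff_0[symmetric] poly_pcompose)

lemma coeff_higher_pderiv_prod_linear_nonneg:
  fixes b :: "'a \<Rightarrow> 'b::linordered_idom"
  assumes "\<And>j. j \<in> A \<Longrightarrow> 0 \<le> b j"
  shows "0 \<le> coeff ((pderiv ^^ k) (\<Prod>j\<in>A. [:b j, 1:])) 0"
  by (intro coeff_higher_pderiv_nonneg coeff_prod_nonneg) (use assms in \<open>auto simp: coeff_pCons split: nat.splits\<close>)

lemma poly_higher_pderiv_prod_roots_le_nonneg:
  fixes a :: "'a \<Rightarrow> 'b::linordered_idom"
  assumes "\<And>j. j \<in> A \<Longrightarrow> a j \<le> t"
  shows "0 \<le> poly ((pderiv ^^ k) (\<Prod>j\<in>A. [:- a j, 1:])) t"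
proof -
  \<comment> \<open>after the shift by t all coefficients are nonnegative, hence also those of every derivative\<close>
  have "(\<Prod>j\<in>A. [:- a j, 1:]) \<circ>\<^sub>p [:t, 1:] = (\<Prod>j\<in>A. [:t - a j, 1:])"
    by (simp add: pcompose_prod pcompose_pCons)
  then show ?thesis
    using poly_higher_pderiv_eq_coeff_pcompose[of 1 k "\<Prod>j\<in>A. [:- a j, 1:]" t]
      coeff_higher_pderiv_prod_linear_nonneg[of A "\<lambda>j. t - a j" k] assms
    by simp
qed

lemma poly_higher_pderiv_prod_roots_ge_sign:
  fixes a :: "'a \<Rightarrow> 'b::linordered_idom"
  assumes "\<And>j. j \<in> A \<Longrightarrow> t \<le> a j"
  shows "0 \<le> (-1) ^ (card A + k) * poly ((pderiv ^^ k) (\<Prod>j\<in>A. [:- a j, 1:])) t"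
proof -
  have "(\<Prod>j\<in>A. [:- a j, 1:]) \<circ>\<^sub>p [:t, -1:] = (\<Prod>j\<in>A. smult (-1) [:a j - t, 1:])"
    by (simp add: pcompose_prod pcompose_pCons)
  also have "\<dots> = smult ((-1) ^ card A) (\<Prod>j\<in>A. [:a j - t, 1:])"
    unfolding prod_smult prod_constant ..
  finally have "(-1) ^ k * poly ((pderiv ^^ k) (\<Prod>j\<in>A. [:- a j, 1:])) t
      = (-1) ^ card A * coeff ((pderiv ^^ k) (\<Prod>j\<in>A. [:a j - t, 1:])) 0"
    using poly_higher_pderiv_eq_coeff_pcompose[of "-1" k "\<Prod>j\<in>A. [:- a j, 1:]" t]
    by (simp add: higher_pderiv_smult)
  then have "(-1) ^ (card A + k) * poly ((pderiv ^^ k) (\<Prod>j\<in>A. [:- a j, 1:])) t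
      = coeff ((pderiv ^^ k) (\<Prod>j\<in>A. [:a j - t, 1:])) 0"
    by (simp add: power_add mult.assoc)
  then show ?thesis
    using coeff_higher_pderiv_prod_linear_nonneg[of A "\<lambda>j. a j - t" k] assms by simp
qed

section \<open>Interpolation at the extremal points of T_n\<close>

(* For n = 0 the division by zero gives the single node cos 0 = 1, which is still correct. *)
definition cheb_node :: "nat \<Rightarrow> nat \<Rightarrow> real" where
  "cheb_node n i = cos (real i * pi / real n)"

definition cheb_lagrange :: "nat \<Rightarrow> nat \<Rightarrow> real poly" where
  "cheb_lagrange n i = (\<Prod>j\<in>{..n} - {i}. [:- cheb_node n j, 1:])"

lemma cheb_node_strict_antimono:
  assumes "i < j" "j \<le> n"
  shows "cheb_node n j < cheb_node n i"
  unfolding cheb_node_def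
proof (rule cos_monotone_0_pi)
  have "real n > 0"
    using assms by simp
  then show "0 \<le> real i * pi / real n" "real i * pi / real n < real j * pi / real n"
      "real j * pi / real n \<le> pi"
    using assms by (simp_all add: divide_strict_right_mono field_simps)
qed

lemma inj_on_cheb_node: "inj_on (cheb_node n) {..n}"
  by (rule inj_onI) (metis atMost_iff cheb_node_strict_antimono less_irrefl linorder_neqE_nat)

lemma abs_cheb_node_le: "\<bar>cheb_node n i\<bar> \<le> 1"
  unfolding cheb_node_def by (rule abs_cos_le_one)

lemma poly_cheb_poly_cheb_node:
  assumes "i \<le> n"
  shows "poly (cheb_poly n) (cheb_node n i) = (-1) ^ i"
  using assms by (cases "n = 0") (simp_all add: cheb_node_def poly_cheb_poly_cos)

lemma poly_cheb_lagrange_other_node: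
  assumes "j \<le> n" "j \<noteq> i"
  shows "poly (cheb_lagrange n i) (cheb_node n j) = 0"
  unfolding cheb_lagrange_def poly_prod using assms by (intro prod_zero) auto

lemma degree_cheb_lagrange_le:
  assumes "i \<le> n"
  shows "degree (cheb_lagrange n i) \<le> n"
proof -
  have "degree (cheb_lagrange n i) \<le> sum (degree \<circ> (\<lambda>j. [:- cheb_node n j, 1:])) ({..n} - {i})"
    unfolding cheb_lagrange_def by (rule degree_prod_sum_le) simp
  then show ?thesis
    using assms by simp
qed

lemma cheb_lagrange_own_node_sign:
  assumes "i \<le> n"
  shows "0 < (-1) ^ i * poly (cheb_lagrange n i) (cheb_node n i)"
proof -
  let ?d = "\<lambda>j. cheb_node n i - cheb_node n j"
  have split: "{..n} - {i} = {..<i} \<union> {i<..n}"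
    using assms by auto
  have "poly (cheb_lagrange n i) (cheb_node n i) = prod ?d {..<i} * prod ?d {i<..n}"
    unfolding cheb_lagrange_def poly_prod split by (subst prod.union_disjoint) auto
  moreover have "(-1) ^ i * prod ?d {..<i} = (\<Prod>j<i. (-1) * ?d j)"
    unfolding prod.distrib by simp
  moreover have "(\<Prod>j<i. (-1) * ?d j) = (\<Prod>j<i. cheb_node n j - cheb_node n i)"
    by simp
  moreover have "0 < (\<Prod>j<i. cheb_node n j - cheb_node n i)" "0 < prod ?d {i<..n}"
    using assms cheb_node_strict_antimono by (auto intro!: prod_pos)
  ultimately show ?thesis
    by (simp add: mult.assoc[symmetric])
qed

lemma lagrange_interpolation_cheb_nodes:
  assumes "degree p \<le> n"
  shows "p = (\<Sum>i\<le>n. smult (poly p (cheb_node n i) / poly (cheb_lagrange n i) (cheb_node n i)) (cheb_lagrange n i))"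
    (is "p = ?q")
proof (rule poly_eqI_degree[where A = "cheb_node n ` {..n}"])
  have card: "card (cheb_node n ` {..n}) = Suc n"
    using inj_on_cheb_node by (simp add: card_image)
  then show "degree p < card (cheb_node n ` {..n})"
    using assms by simp
  have "degree ?q \<le> n"
    by (intro degree_sum_le order.trans[OF degree_smult_le] degree_cheb_lagrange_le) auto
  then show "degree ?q < card (cheb_node n ` {..n})"
    using card by simp
  fix x
  assume "x \<in> cheb_node n ` {..n}"
  then obtain m where m: "m \<le> n" "x = cheb_node n m"
    by auto
  have "poly ?q x = poly p x / poly (cheb_lagrange n m) x * poly (cheb_lagrange n m) x"
    unfolding poly_sum poly_smult m(2)
    by (subst sum.mono_neutral_right[of "{..n}" "{m}"]) (use m poly_cheb_lagrange_other_node in auto)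
  also have "\<dots> = poly p x"
    using cheb_lagrange_own_node_sign[OF m(1)] m(2) by auto
  finally show "poly p x = poly ?q x"
    by simp
qed

lemma higher_pderiv_cheb_lagrange_common_sign:
  assumes t: "1 \<le> \<bar>t\<bar>"
  obtains \<sigma> :: real
  where "\<bar>\<sigma>\<bar> = 1" "\<And>i. i \<le> n \<Longrightarrow> 0 \<le> \<sigma> * poly ((pderiv ^^ k) (cheb_lagrange n i)) t"
proof (cases "1 \<le> t")
  case True
  show ?thesis
    using True abs_cheb_node_le[of n]
    by (intro that[of 1])
       (auto intro!: poly_higher_pderiv_prod_roots_le_nonneg simp: cheb_lagrange_def abs_le_iff intro: order.trans)
next
  case False
  then have "t \<le> -1"
    using t by auto
  show ?thesis
  proof (rule that[of "(-1) ^ (n + k)"])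
    fix i
    assume i: "i \<le> n"
    have "0 \<le> (-1) ^ (card ({..n} - {i}) + k) * poly ((pderiv ^^ k) (cheb_lagrange n i)) t"
      unfolding cheb_lagrange_def using \<open>t \<le> -1\<close> abs_cheb_node_le[of n]
      by (intro poly_higher_pderiv_prod_roots_ge_sign) (auto simp: abs_le_iff intro: order.trans)
    then show "0 \<le> (-1) ^ (n + k) * poly ((pderiv ^^ k) (cheb_lagrange n i)) t"
      using i by simp
  qed simp
qed

section \<open>A Markov-type inequality outside the interval\<close>

lemma abs_higher_pderiv_le_cheb_outside:
  fixes p :: "real poly"
  assumes deg: "degree p \<le> n" and t: "1 \<le> \<bar>t\<bar>"
    and M: "\<And>s. \<bar>s\<bar> \<le> 1 \<Longrightarrow> \<bar>poly p s\<bar> \<le> M"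
  shows "\<bar>poly ((pderiv ^^ k) p) t\<bar> \<le> \<bar>poly ((pderiv ^^ k) (cheb_poly n)) t\<bar> * M"
proof -
  define D where "D i = poly ((pderiv ^^ k) (cheb_lagrange n i)) t / poly (cheb_lagrange n i) (cheb_node n i)" for i
  have interpolate: "poly ((pderiv ^^ k) q) t = (\<Sum>i\<le>n. poly q (cheb_node n i) * D i)"
    if "degree q \<le> n" for q
    by (subst lagrange_interpolation_cheb_nodes[OF that])
       (simp add: D_def higher_pderiv_sum higher_pderiv_smult poly_sum)
  obtain \<sigma> :: real where \<sigma>: "\<bar>\<sigma>\<bar> = 1" "\<And>i. i \<le> n \<Longrightarrow> 0 \<le> \<sigma> * poly ((pderiv ^^ k) (cheb_lagrange n i)) t"
    using higher_pderiv_cheb_lagrange_common_sign[OF t, where n = n and k = k] by blast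
  have abs_D: "\<bar>D i\<bar> = \<sigma> * ((-1) ^ i * D i)" if i: "i \<le> n" for i
  proof -
    have "0 \<le> (\<sigma> * poly ((pderiv ^^ k) (cheb_lagrange n i)) t)
              / ((-1) ^ i * poly (cheb_lagrange n i) (cheb_node n i))"
      using \<sigma>(2)[OF i] cheb_lagrange_own_node_sign[OF i] by simp
    also have "\<dots> = \<sigma> * ((-1) ^ i * D i)"
      unfolding D_def by (cases "even i") simp_all
    finally have "0 \<le> \<sigma> * ((-1) ^ i * D i)" .
    moreover have "\<bar>\<sigma> * ((-1) ^ i * D i)\<bar> = \<bar>D i\<bar>"
      using \<sigma>(1) by (simp add: abs_mult power_abs)
    ultimately show ?thesis
      by simp
  qed
  have "\<bar>poly ((pderiv ^^ k) (cheb_poly n)) t\<bar> = \<bar>\<sigma> * poly ((pderiv ^^ k) (cheb_poly n)) t\<bar>"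
    using \<sigma>(1) by (simp add: abs_mult)
  also have "\<sigma> * poly ((pderiv ^^ k) (cheb_poly n)) t = (\<Sum>i\<le>n. \<sigma> * ((-1) ^ i * D i))"
    by (simp add: interpolate[OF degree_cheb_poly_le] poly_cheb_poly_cheb_node sum_distrib_left)
  also have "\<dots> = (\<Sum>i\<le>n. \<bar>D i\<bar>)"
    using abs_D by simp
  finally have T: "\<bar>poly ((pderiv ^^ k) (cheb_poly n)) t\<bar> = (\<Sum>i\<le>n. \<bar>D i\<bar>)"
    by simp
  have "\<bar>poly ((pderiv ^^ k) p) t\<bar> \<le> (\<Sum>i\<le>n. \<bar>poly p (cheb_node n i)\<bar> * \<bar>D i\<bar>)"
    unfolding interpolate[OF deg] abs_mult[symmetric] by (rule sum_abs)
  also have "\<dots> \<le> (\<Sum>i\<le>n. M * \<bar>D i\<bar>)"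
    by (intro sum_mono mult_right_mono M abs_cheb_node_le) simp
  finally show ?thesis
    unfolding T by (simp add: sum_distrib_left mult.commute)
qed

lemma cnj_sgn_mult_self: "cnj (sgn z) * z = complex_of_real (cmod z)"
proof (cases "z = 0")
  case False
  have "cnj (sgn z) * z = z * cnj z / complex_of_real (cmod z)"
    by (simp add: sgn_div_norm scaleR_conv_of_real field_simps)
  also have "\<dots> = complex_of_real (cmod z)"
    using False by (simp add: complex_norm_square[symmetric] power2_eq_square)
  finally show ?thesis .
qed simp

lemma cmod_higher_deriv_sum_le_cheb_outside:
  fixes b :: "nat \<Rightarrow> complex"
  assumes t: "1 \<le> \<bar>t\<bar>"
    and M: "\<And>s. \<bar>s\<bar> \<le> 1 \<Longrightarrow> cmod (\<Sum>d\<le>n. complex_of_real (s ^ d) * b d) \<le> M"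
  shows "cmod (\<Sum>d\<le>n. of_nat (fact k * (d choose k)) * complex_of_real (t ^ (d - k)) * b d)
         \<le> \<bar>poly ((pderiv ^^ k) (cheb_poly n)) t\<bar> * M"
proof -
  define z where "z = (\<Sum>d\<le>n. of_nat (fact k * (d choose k)) * complex_of_real (t ^ (d - k)) * b d)"
  define w where "w = cnj (sgn z)"
  have w: "cmod w \<le> 1" "w * z = complex_of_real (cmod z)"
    unfolding w_def by (simp_all add: norm_sgn cnj_sgn_mult_self)
  define p where "p = (\<Sum>d\<le>n. monom (Re (w * b d)) d)"
  have "degree p \<le> n"
    unfolding p_def by (intro degree_sum_le order.trans[OF degree_monom_le]) auto
  moreover have "\<bar>poly p s\<bar> \<le> M" if "\<bar>s\<bar> \<le> 1" for s
  proof -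
    have "poly p s = Re (w * (\<Sum>d\<le>n. complex_of_real (s ^ d) * b d))"
      unfolding p_def by (simp add: poly_sum poly_monom sum_distrib_left algebra_simps)
    also have "\<bar>\<dots>\<bar> \<le> cmod w * cmod (\<Sum>d\<le>n. complex_of_real (s ^ d) * b d)"
      by (rule order.trans[OF abs_Re_le_cmod]) (simp add: norm_mult)
    also have "\<dots> \<le> M"
      using w(1) M[OF that] by (simp add: mult_le_one order.trans[OF mult_right_mono])
    finally show ?thesis .
  qed
  moreover have "poly ((pderiv ^^ k) p) t = cmod z"
  proof -
    have "poly ((pderiv ^^ k) p) t = Re (w * z)"
      unfolding p_def z_def poly_higher_pderiv_monom_sum
      by (simp add: sum_distrib_left algebra_simps)
    then show ?thesis
      using w(2) by simp
  qed
  ultimately show ?thesis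
    using abs_higher_pderiv_le_cheb_outside[OF _ t, of p n M k] unfolding z_def by simp
qed

lemma cmod_higher_deriv_sum_le_cheb_scaled:
  fixes b :: "nat \<Rightarrow> complex"
  assumes lam: "0 < lam" and x: "lam \<le> \<bar>x\<bar>"
    and M: "\<And>s. \<bar>s\<bar> \<le> lam \<Longrightarrow> cmod (\<Sum>d\<le>n. complex_of_real (s ^ d) * b d) \<le> M"
  shows "cmod (\<Sum>d\<le>n. of_nat (fact k * (d choose k)) * complex_of_real (x ^ (d - k)) * b d)
         \<le> inverse (lam ^ k) * \<bar>poly ((pderiv ^^ k) (cheb_poly n)) (x / lam)\<bar> * M"
proof -
  let ?F = "\<lambda>d. of_nat (fact k * (d choose k)) :: complex"
  define b' where "b' d = complex_of_real (lam ^ d) * b d" for d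
  have "1 \<le> \<bar>x / lam\<bar>"
    using lam x by simp
  moreover have "cmod (\<Sum>d\<le>n. complex_of_real (s ^ d) * b' d) \<le> M" if "\<bar>s\<bar> \<le> 1" for s
  proof -
    have "\<bar>lam * s\<bar> \<le> lam"
      using that lam by (simp add: abs_mult mult_left_le)
    then show ?thesis
      using M[of "lam * s"] by (simp add: b'_def power_mult_distrib ac_simps)
  qed
  ultimately have "cmod (\<Sum>d\<le>n. ?F d * complex_of_real ((x / lam) ^ (d - k)) * b' d)
      \<le> \<bar>poly ((pderiv ^^ k) (cheb_poly n)) (x / lam)\<bar> * M"
    by (rule cmod_higher_deriv_sum_le_cheb_outside)
  moreover have "?F d * complex_of_real ((x / lam) ^ (d - k)) * b' d
      = complex_of_real (lam ^ k) * (?F d * complex_of_real (x ^ (d - k)) * b d)" for d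
  proof (cases "k \<le> d")
    case True
    then obtain e where "d = k + e"
      using le_Suc_ex by blast
    with lam show ?thesis
      by (simp add: b'_def power_add power_divide)
  qed simp
  ultimately have "cmod (complex_of_real (lam ^ k) * (\<Sum>d\<le>n. ?F d * complex_of_real (x ^ (d - k)) * b d))
      \<le> \<bar>poly ((pderiv ^^ k) (cheb_poly n)) (x / lam)\<bar> * M"
    by (simp only: sum_distrib_left)
  then have "lam ^ k * cmod (\<Sum>d\<le>n. ?F d * complex_of_real (x ^ (d - k)) * b d)
      \<le> \<bar>poly ((pderiv ^^ k) (cheb_poly n)) (x / lam)\<bar> * M"
    using lam by (simp add: norm_mult norm_power)
  then show ?thesis
    using lam by (simp add: field_simps)
qed

section \<open>Polynomials on a cube\<close>

lemma Qdeg_eq_PiE: "Qdeg n = PiE UNIV (\<lambda>_. {..n})"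
  by (auto simp: Qdeg_def PiE_UNIV_domain)

lemma finite_Qdeg: "finite (Qdeg n :: ('m::finite \<Rightarrow> nat) set)"
  unfolding Qdeg_eq_PiE by (rule finite_PiE) auto

lemma Pdeg_subset_Qdeg: "Pdeg n \<subseteq> (Qdeg n :: ('m::finite \<Rightarrow> nat) set)"
proof
  fix a :: "'m \<Rightarrow> nat"
  assume "a \<in> Pdeg n"
  then have "a j \<le> n" for j
    using member_le_sum[of j UNIV a] by (simp add: Pdeg_def)
  then show "a \<in> Qdeg n"
    by (simp add: Qdeg_def)
qed

lemma finite_Pdeg: "finite (Pdeg n :: ('m::finite \<Rightarrow> nat) set)"
  by (rule finite_subset[OF Pdeg_subset_Qdeg finite_Qdeg])

lemma bdd_above_cmod_mpoly_eval:
  fixes K :: "(real^'m::finite) set"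
  assumes "compact K"
  shows "bdd_above ((\<lambda>y. cmod (mpoly_eval S c y)) ` K)"
proof -
  have "continuous_on K (\<lambda>y. cmod (mpoly_eval S c y))"
    unfolding mpoly_eval_def by (intro continuous_intros)
  then have "compact ((\<lambda>y. cmod (mpoly_eval S c y)) ` K)"
    using assms by (rule compact_continuous_image)
  then show ?thesis
    by (intro bounded_imp_bdd_above compact_imp_bounded)
qed

lemma compact_cube: "compact (cube lam :: (real^'m::finite) set)"
proof -
  have "cube lam = cbox (\<chi> _. - lam) (\<chi> _. lam :: real^'m)"
    by (auto simp: cube_def mem_box_cart abs_le_iff minus_le_iff)
  then show ?thesis
    by simp
qed

lemma sum_Qdeg_split_coordinate:
  fixes c :: "('m::finite \<Rightarrow> nat) \<Rightarrow> complex" and w :: "'m \<Rightarrow> nat \<Rightarrow> complex"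
  shows "(\<Sum>a\<in>Qdeg n. c a * (\<Prod>j\<in>UNIV. w j (a j)))
       = (\<Sum>d\<le>n. w i d * (\<Sum>a\<in>{a\<in>Qdeg n. a i = d}. c a * (\<Prod>j\<in>UNIV - {i}. w j (a j))))"
proof -
  have "(\<Sum>a\<in>Qdeg n. c a * (\<Prod>j\<in>UNIV. w j (a j)))
      = (\<Sum>d\<le>n. \<Sum>a\<in>{a\<in>Qdeg n. a i = d}. c a * (\<Prod>j\<in>UNIV. w j (a j)))"
    by (rule sum.group[symmetric]) (use finite_Qdeg in \<open>auto simp: Qdeg_def\<close>)
  also have "\<dots> = (\<Sum>d\<le>n. w i d * (\<Sum>a\<in>{a\<in>Qdeg n. a i = d}. c a * (\<Prod>j\<in>UNIV - {i}. w j (a j))))"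
    unfolding sum_distrib_left
  proof (rule sum.cong[OF refl], rule sum.cong[OF refl])
    fix d a
    assume "a \<in> {a \<in> Qdeg n. a i = d}"
    then have "a i = d"
      by simp
    moreover have "(\<Prod>j\<in>UNIV. w j (a j)) = w i (a i) * (\<Prod>j\<in>UNIV - {i}. w j (a j))"
      by (rule prod.remove) auto
    ultimately show "c a * (\<Prod>j\<in>UNIV. w j (a j)) = w i d * (c a * (\<Prod>j\<in>UNIV - {i}. w j (a j)))"
      by (simp only: mult.left_commute)
  qed
  finally show ?thesis .
qed

lemma cmod_sum_Qdeg_tensor_le:
  fixes c :: "('m::finite \<Rightarrow> nat) \<Rightarrow> complex" and l :: "'m \<Rightarrow> nat \<Rightarrow> complex" and C :: "'m \<Rightarrow> real"
  assumes l: "\<And>j b M'. (\<And>s. \<bar>s\<bar> \<le> lam \<Longrightarrow> cmod (\<Sum>d\<le>n. complex_of_real (s ^ d) * b d) \<le> M')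
      \<Longrightarrow> cmod (\<Sum>d\<le>n. l j d * b d) \<le> C j * M'"
    and M: "\<And>y. (\<And>j. \<bar>y $ j\<bar> \<le> lam) \<Longrightarrow> cmod (mpoly_eval (Qdeg n) c y) \<le> M"
  shows "cmod (\<Sum>a\<in>Qdeg n. c a * (\<Prod>j\<in>UNIV. l j (a j))) \<le> (\<Prod>j\<in>UNIV. C j) * M"
proof -
  define W where "W S y j d = (if j \<in> S then l j d else complex_of_real ((y $ j) ^ d))"
    for S and y :: "real^'m" and j d
  have main: "cmod (\<Sum>a\<in>Qdeg n. c a * (\<Prod>j\<in>UNIV. W S y j (a j))) \<le> (\<Prod>j\<in>S. C j) * M"
    if "finite S" "\<forall>j. j \<notin> S \<longrightarrow> \<bar>y $ j\<bar> \<le> lam" for S y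
    using that
  proof (induction S arbitrary: y rule: finite_induct)
    case empty
    then show ?case
      using M[of y] by (simp add: W_def mpoly_eval_def)
  next
    case (insert i S)
    define B where "B d = (\<Sum>a\<in>{a\<in>Qdeg n. a i = d}. c a * (\<Prod>j\<in>UNIV - {i}. W S y j (a j)))" for d
    have "cmod (\<Sum>d\<le>n. complex_of_real (s ^ d) * B d) \<le> (\<Prod>j\<in>S. C j) * M" if s: "\<bar>s\<bar> \<le> lam" for s
    proof -
      define y' where "y' = (\<chi> j. if j = i then s else y $ j)"
      have "(\<Sum>a\<in>Qdeg n. c a * (\<Prod>j\<in>UNIV. W S y' j (a j))) = (\<Sum>d\<le>n. complex_of_real (s ^ d) * B d)"
        unfolding sum_Qdeg_split_coordinate[of c "W S y'" n i] B_def
        using insert.hyps(2) by (intro sum.cong refl arg_cong2[where f = "(*)"] prod.cong)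
          (auto simp: W_def y'_def)
      moreover have "\<forall>j. j \<notin> S \<longrightarrow> \<bar>y' $ j\<bar> \<le> lam"
        using insert.prems s by (simp add: y'_def)
      ultimately show ?thesis
        using insert.IH[of y'] by simp
    qed
    then have "cmod (\<Sum>d\<le>n. l i d * B d) \<le> C i * ((\<Prod>j\<in>S. C j) * M)"
      by (rule l)
    moreover have "(\<Sum>a\<in>Qdeg n. c a * (\<Prod>j\<in>UNIV. W (insert i S) y j (a j))) = (\<Sum>d\<le>n. l i d * B d)"
      unfolding sum_Qdeg_split_coordinate[of c "W (insert i S) y" n i] B_def
      by (intro sum.cong refl arg_cong2[where f = "(*)"] prod.cong) (auto simp: W_def)
    ultimately show ?case
      using insert.hyps by (simp add: mult.assoc)
  qed
  then have "cmod (\<Sum>a\<in>Qdeg n. c a * (\<Prod>j\<in>UNIV. W UNIV 0 j (a j))) \<le> (\<Prod>j\<in>UNIV. C j) * M"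
    by simp
  moreover have "W UNIV 0 = l"
    by (simp add: W_def fun_eq_iff)
  ultimately show ?thesis
    by (simp only:)
qed

lemma cmod_mpoly_deriv_Qdeg_le:
  fixes x :: "real^'m::finite" and c :: "('m \<Rightarrow> nat) \<Rightarrow> complex" and k :: "'m \<Rightarrow> nat"
  assumes lam: "0 < lam" and x: "\<forall>j. lam < \<bar>x $ j\<bar>"
  shows "cmod (mpoly_deriv (Qdeg n) c k x)
         \<le> inverse (lam ^ (\<Sum>j\<in>UNIV. k j))
            * \<bar>\<Prod>j\<in>UNIV. (deriv ^^ k j) (cheb n) (x $ j / lam)\<bar>
            * (SUP y\<in>cube lam. cmod (mpoly_eval (Qdeg n) c y))"
proof -
  define l where "l j d = of_nat (fact (k j) * (d choose k j)) * complex_of_real ((x $ j) ^ (d - k j))" for j d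
  define C where "C j = inverse (lam ^ k j) * \<bar>poly ((pderiv ^^ k j) (cheb_poly n)) (x $ j / lam)\<bar>" for j
  have deriv_eq: "mpoly_deriv (Qdeg n) c k x = (\<Sum>a\<in>Qdeg n. c a * (\<Prod>j\<in>UNIV. l j (a j)))"
    unfolding mpoly_deriv_def l_def ..
  have "cmod (\<Sum>a\<in>Qdeg n. c a * (\<Prod>j\<in>UNIV. l j (a j))) \<le> (\<Prod>j\<in>UNIV. C j) * (SUP y\<in>cube lam. cmod (mpoly_eval (Qdeg n) c y))"
  proof (rule cmod_sum_Qdeg_tensor_le)
    show "cmod (\<Sum>d\<le>n. l j d * b d) \<le> C j * M'"
      if "\<And>s. \<bar>s\<bar> \<le> lam \<Longrightarrow> cmod (\<Sum>d\<le>n. complex_of_real (s ^ d) * b d) \<le> M'" for j b M'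
      unfolding l_def C_def using lam less_imp_le[OF x[rule_format]]
      by (rule cmod_higher_deriv_sum_le_cheb_scaled) (rule that)
    show "cmod (mpoly_eval (Qdeg n) c y) \<le> (SUP y\<in>cube lam. cmod (mpoly_eval (Qdeg n) c y))"
      if "\<And>j. \<bar>y $ j\<bar> \<le> lam" for y
      using that by (intro cSUP_upper bdd_above_cmod_mpoly_eval compact_cube) (simp_all add: cube_def)
  qed
  moreover have "(\<Prod>j\<in>UNIV. C j) = inverse (lam ^ (\<Sum>j\<in>UNIV. k j)) * \<bar>\<Prod>j\<in>UNIV. (deriv ^^ k j) (cheb n) (x $ j / lam)\<bar>"
  proof -
    have "(\<Prod>j\<in>UNIV. inverse (lam ^ k j)) = inverse (\<Prod>j\<in>UNIV. lam ^ k j)"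
      using prod_inversef[of "\<lambda>j. lam ^ k j" UNIV] by (simp add: o_def)
    then show ?thesis
      unfolding C_def higher_deriv_cheb by (simp add: prod.distrib power_sum abs_prod)
  qed
  ultimately show ?thesis
    unfolding deriv_eq by simp
qed

section \<open>Width of a symmetric convex body\<close>

lemma bdd_inner_image:
  fixes V :: "'a::real_inner set"
  assumes "bounded V"
  shows "bdd_above ((\<lambda>y. u \<bullet> y) ` V)" "bdd_below ((\<lambda>y. u \<bullet> y) ` V)"
  using bounded_linear_image[OF assms bounded_linear_inner_right[of u]]
  by (auto intro: bounded_imp_bdd_above bounded_imp_bdd_below)

lemma width_le_inner_range:
  fixes V :: "'a::euclidean_space set"
  assumes "bounded V" "V \<noteq> {}" "norm u = 1"
  shows "width V \<le> (SUP y\<in>V. u \<bullet> y) - (INF y\<in>V. u \<bullet> y)"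
  unfolding width_def
proof (rule cInf_lower)
  show "(SUP y\<in>V. u \<bullet> y) - (INF y\<in>V. u \<bullet> y) \<in> {(SUP y\<in>V. u \<bullet> y) - (INF y\<in>V. u \<bullet> y) | u. norm u = 1}"
    using assms(3) by blast
  have "(INF y\<in>V. v \<bullet> y) \<le> (SUP y\<in>V. v \<bullet> y)" for v
    using assms(2) bdd_inner_image[OF assms(1), of v] by (intro cInf_le_cSup) auto
  then show "bdd_below {(SUP y\<in>V. u \<bullet> y) - (INF y\<in>V. u \<bullet> y) | u. norm u = 1}"
    by (intro bdd_belowI[of _ 0]) auto
qed

lemma ball_radius_le_width:
  fixes V :: "'a::euclidean_space set"
  assumes V: "bounded V" "\<forall>y\<in>V. - y \<in> V" and r: "0 < r" "ball z r \<subseteq> V"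
  shows "r \<le> width V"
  unfolding width_def
proof (rule cInf_greatest)
  obtain b :: 'a where "b \<in> Basis"
    using nonempty_Basis by blast
  then show "{(SUP y\<in>V. u \<bullet> y) - (INF y\<in>V. u \<bullet> y) | u. norm u = 1} \<noteq> {}"
    by (auto intro: norm_Basis)
  fix h
  assume "h \<in> {(SUP y\<in>V. u \<bullet> y) - (INF y\<in>V. u \<bullet> y) | u. norm u = 1}"
  then obtain u where u: "norm u = 1" and h: "h = (SUP y\<in>V. u \<bullet> y) - (INF y\<in>V. u \<bullet> y)"
    by blast
  \<comment> \<open>the points z + r/2 u and z - r/2 u of the ball, together with their reflections, span r in direction u\<close>
  define p where "p = z + (r / 2) *\<^sub>R u"
  define q where "q = z - (r / 2) *\<^sub>R u"
  have "p \<in> V" "q \<in> V"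
    using r u by (auto simp: p_def q_def dist_norm intro!: subsetD[OF r(2)])
  then have "p \<in> V" "- q \<in> V" "- p \<in> V" "q \<in> V"
    using V(2) by auto
  then have "u \<bullet> p \<le> (SUP y\<in>V. u \<bullet> y)" "u \<bullet> - q \<le> (SUP y\<in>V. u \<bullet> y)"
      "(INF y\<in>V. u \<bullet> y) \<le> u \<bullet> - p" "(INF y\<in>V. u \<bullet> y) \<le> u \<bullet> q"
    using bdd_inner_image[OF V(1), of u] by (blast intro: cSUP_upper cINF_lower)+
  moreover have "u \<bullet> u = 1"
    using u by (simp add: norm_eq_1)
  ultimately show "r \<le> h"
    unfolding h p_def q_def by (simp add: inner_add_right inner_diff_right)
qed

lemma cball_half_width_subset:
  fixes V :: "'a::euclidean_space set"
  assumes V: "compact V" "convex V" "V \<noteq> {}" "\<forall>y\<in>V. - y \<in> V"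
  shows "cball 0 (width V / 2) \<subseteq> V"
proof
  fix y :: 'a
  assume y: "y \<in> cball 0 (width V / 2)"
  show "y \<in> V"
  proof (rule ccontr)
    assume "y \<notin> V"
    then obtain a b where ab: "a \<bullet> y < b" "\<forall>x\<in>V. b < a \<bullet> x"
      using separating_hyperplane_closed_point[OF V(2) compact_imp_closed[OF V(1)]] by blast
    then have "a \<noteq> 0"
      using V(3) by force
    define u where "u = a /\<^sub>R norm a"
    define \<beta> where "\<beta> = b / norm a"
    have "0 < norm a"
      using \<open>a \<noteq> 0\<close> by simp
    have u: "norm u = 1"
      using \<open>a \<noteq> 0\<close> by (simp add: u_def)
    have uy: "u \<bullet> y < \<beta>" and uV: "\<forall>x\<in>V. \<beta> < u \<bullet> x"
      using ab \<open>0 < norm a\<close> by (simp_all add: u_def \<beta>_def field_simps)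
    have bdd: "bdd_above ((\<lambda>y. u \<bullet> y) ` V)" "bdd_below ((\<lambda>y. u \<bullet> y) ` V)"
      using bdd_inner_image[OF compact_imp_bounded[OF V(1)]] by auto
    have "\<beta> \<le> (INF x\<in>V. u \<bullet> x)"
      using uV V(3) by (intro cINF_greatest) auto
    moreover have "(SUP x\<in>V. u \<bullet> x) \<le> - \<beta>"
    proof (rule cSUP_least[OF V(3)])
      fix x
      assume "x \<in> V"
      then show "u \<bullet> x \<le> - \<beta>"
        using uV V(4) by force
    qed
    moreover have "width V \<le> (SUP y\<in>V. u \<bullet> y) - (INF y\<in>V. u \<bullet> y)"
      using compact_imp_bounded[OF V(1)] V(3) u by (rule width_le_inner_range)
    moreover have "- (u \<bullet> y) \<le> width V / 2"
      using y Cauchy_Schwarz_ineq2[of u y] u by (auto simp: dist_norm)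
    ultimately show False
      using uy by linarith
  qed
qed

section \<open>Polynomials outside a symmetric convex body\<close>

lemma mpoly_eval_Pdeg_scaleR:
  fixes x :: "real^'m::finite" and c :: "('m \<Rightarrow> nat) \<Rightarrow> complex"
  shows "mpoly_eval (Pdeg n) c (r *\<^sub>R x)
    = (\<Sum>d\<le>n. complex_of_real (r ^ d) *
        (\<Sum>a\<in>{a\<in>Pdeg n. (\<Sum>j\<in>UNIV. a j) = d}. c a * (\<Prod>j\<in>UNIV. complex_of_real ((x $ j) ^ a j))))"
proof -
  have "(\<Prod>j\<in>UNIV. complex_of_real (((r *\<^sub>R x) $ j) ^ a j))
      = complex_of_real (r ^ (\<Sum>j\<in>UNIV. a j)) * (\<Prod>j\<in>UNIV. complex_of_real ((x $ j) ^ a j))" for a :: "'m \<Rightarrow> nat"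
    by (simp add: power_mult_distrib prod.distrib power_sum)
  then have "mpoly_eval (Pdeg n) c (r *\<^sub>R x)
      = (\<Sum>a\<in>Pdeg n. complex_of_real (r ^ (\<Sum>j\<in>UNIV. a j)) * (c a * (\<Prod>j\<in>UNIV. complex_of_real ((x $ j) ^ a j))))"
    unfolding mpoly_eval_def by (simp add: ac_simps)
  also have "\<dots> = (\<Sum>d\<le>n. \<Sum>a\<in>{a\<in>Pdeg n. (\<Sum>j\<in>UNIV. a j) = d}.
        complex_of_real (r ^ (\<Sum>j\<in>UNIV. a j)) * (c a * (\<Prod>j\<in>UNIV. complex_of_real ((x $ j) ^ a j))))"
    by (rule sum.group[symmetric]) (use finite_Pdeg in \<open>auto simp: Pdeg_def\<close>)
  also have "\<dots> = (\<Sum>d\<le>n. complex_of_real (r ^ d) *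
        (\<Sum>a\<in>{a\<in>Pdeg n. (\<Sum>j\<in>UNIV. a j) = d}. c a * (\<Prod>j\<in>UNIV. complex_of_real ((x $ j) ^ a j))))"
    by (simp add: sum_distrib_left)
  finally show ?thesis .
qed

lemma cmod_mpoly_eval_Pdeg_le_segment:
  fixes V :: "(real^'m::finite) set" and x :: "real^'m" and c :: "('m \<Rightarrow> nat) \<Rightarrow> complex"
  assumes "compact V" "0 < lam" "lam \<le> 1" and segment: "\<And>s. \<bar>s\<bar> \<le> lam \<Longrightarrow> s *\<^sub>R x \<in> V"
  shows "cmod (mpoly_eval (Pdeg n) c x)
         \<le> \<bar>cheb n (1 / lam)\<bar> * (SUP y\<in>V. cmod (mpoly_eval (Pdeg n) c y))"
proof -
  define B where "B d = (\<Sum>a\<in>{a\<in>Pdeg n. (\<Sum>j\<in>UNIV. a j) = d}. c a * (\<Prod>j\<in>UNIV. complex_of_real ((x $ j) ^ a j)))" for d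
  have "cmod (\<Sum>d\<le>n. complex_of_real (s ^ d) * B d) \<le> (SUP y\<in>V. cmod (mpoly_eval (Pdeg n) c y))"
    if "\<bar>s\<bar> \<le> lam" for s
    unfolding B_def mpoly_eval_Pdeg_scaleR[symmetric]
    by (intro cSUP_upper bdd_above_cmod_mpoly_eval segment that assms(1))
  then have "cmod (\<Sum>d\<le>n. of_nat (fact 0 * (d choose 0)) * complex_of_real (1 ^ (d - 0)) * B d)
      \<le> inverse (lam ^ 0) * \<bar>poly ((pderiv ^^ 0) (cheb_poly n)) (1 / lam)\<bar>
         * (SUP y\<in>V. cmod (mpoly_eval (Pdeg n) c y))"
    using assms(2,3) by (intro cmod_higher_deriv_sum_le_cheb_scaled) auto
  moreover have "(\<Sum>d\<le>n. of_nat (fact 0 * (d choose 0)) * complex_of_real (1 ^ (d - 0)) * B d)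
      = mpoly_eval (Pdeg n) c x"
    using mpoly_eval_Pdeg_scaleR[of n c 1 x] by (simp add: B_def)
  ultimately show ?thesis
    by (simp add: poly_cheb_poly)
qed

lemma cmod_mpoly_eval_Pdeg_le:
  fixes V :: "(real^'m::finite) set" and x :: "real^'m" and c :: "('m \<Rightarrow> nat) \<Rightarrow> complex"
  assumes V: "compact V" "convex V" "interior V \<noteq> {}" "\<forall>y\<in>V. - y \<in> V" and x: "x \<notin> V"
  shows "cmod (mpoly_eval (Pdeg n) c x)
         \<le> cheb n (2 * norm x / width V) * (SUP y\<in>V. cmod (mpoly_eval (Pdeg n) c y))"
proof -
  define w where "w = width V"
  obtain z r where "0 < r" "ball z r \<subseteq> V"
    using V(3) mem_interior by blast
  then have "0 < w" "V \<noteq> {}"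
    using ball_radius_le_width[OF compact_imp_bounded[OF V(1)] V(4)] by (force simp: w_def)+
  have cball: "cball 0 (w / 2) \<subseteq> V"
    unfolding w_def using V(1,2) \<open>V \<noteq> {}\<close> V(4) by (rule cball_half_width_subset)
  then have "w / 2 < norm x"
    using x by (force simp: dist_norm)
  then have "0 < norm x"
    using \<open>0 < w\<close> by linarith
  define lam where "lam = w / (2 * norm x)"
  have "cmod (mpoly_eval (Pdeg n) c x) \<le> \<bar>cheb n (1 / lam)\<bar> * (SUP y\<in>V. cmod (mpoly_eval (Pdeg n) c y))"
  proof (rule cmod_mpoly_eval_Pdeg_le_segment[OF V(1)])
    show "0 < lam" "lam \<le> 1"
      using \<open>0 < w\<close> \<open>w / 2 < norm x\<close> \<open>0 < norm x\<close> by (simp_all add: lam_def field_simps)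
    show "s *\<^sub>R x \<in> V" if "\<bar>s\<bar> \<le> lam" for s
    proof -
      have "norm (s *\<^sub>R x) \<le> lam * norm x"
        using that by (simp add: mult_right_mono)
      also have "\<dots> = w / 2"
        using \<open>0 < norm x\<close> by (simp add: lam_def)
      finally show ?thesis
        using cball by (auto simp: dist_norm)
    qed
  qed
  moreover have "1 / lam = 2 * norm x / width V" "1 \<le> 2 * norm x / width V"
    using \<open>0 < w\<close> \<open>w / 2 < norm x\<close> by (simp_all add: lam_def w_def field_simps)
  ultimately show ?thesis
    by (simp add: cheb_nonneg)
qed

theorem lemmaL2p4:
  fixes n :: nat
  shows
   "(\<forall>(V :: (real^'m) set) (x :: real^'m) (c :: ('m \<Rightarrow> nat) \<Rightarrow> complex).
       compact V \<and> convex V \<and> interior V \<noteq> {} \<and> (\<forall>y\<in>V. - y \<in> V) \<and> x \<notin> V \<longrightarrow>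
       cmod (mpoly_eval (Pdeg n) c x)
         \<le> cheb n (2 * norm x / width V) * (SUP y\<in>V. cmod (mpoly_eval (Pdeg n) c y)))
  \<and> (\<forall>(lam::real) (k :: 'm \<Rightarrow> nat) (x :: real^'m) (c :: ('m \<Rightarrow> nat) \<Rightarrow> complex).
       lam > 0 \<and> (\<forall>j. \<bar>x$j\<bar> > lam) \<longrightarrow>
       cmod (mpoly_deriv (Qdeg n) c k x)
         \<le> inverse (lam ^ (\<Sum>j\<in>UNIV. k j))
            * \<bar>\<Prod>j\<in>UNIV. (deriv ^^ k j) (cheb n) (x$j / lam)\<bar>
            * (SUP y\<in>cube lam. cmod (mpoly_eval (Qdeg n) c y)))"
  using cmod_mpoly_eval_Pdeg_le cmod_mpoly_deriv_Qdeg_le by blast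

end
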